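(* Let $d\ge2$, $n\ge1$. The magic entropy of $n$-qudit unitaries satisfies: (1) $M[U]\ge0$, with $M[U]=0$ if and only if $U$ is a Clifford unitary; (2) $M[VU]=M[U]$ for every unitary $U$ and every Clifford unitary $V$; (3) $M[U_1\otimes U_2]=\max\{M[U_1],M[U_2]\}$ for all unitaries $U_1,U_2$ on disjoint sets of qudits.
   Context: Let $V=\mathbb{Z}_d\times\mathbb{Z}_d$; for $a=(s,t)\in V$, $P_a=X^sZ^t$ with $X|j\rangle=|j+1\bmod d\rangle$, $Z|j\rangle=e^{2\pi ij/d}|j\rangle$; $P_{\vec a}=\bigotimes_iP_{a_i}$, $|\vec a|=\#\{i:a_i\ne(0,0)\}$; weight-1 Pauli operators are $P_{\vec a}$ with $|\vec a|=1$. $\|A\|_2=(d^{-n}\mathrm{Tr}(A^\dagger A))^{1/2}$; for $\|O\|_2=1$, $P_O[\vec a]=d^{-2n}|\mathrm{Tr}(OP_{\vec a})|^2$ and $H[O]=-\sum_{\vec a}P_O[\vec a]\log P_O[\vec a]$. The magic entropy is $M[U]=\max_{O\text{ weight-1 Pauli}}H[UOU^\dagger]$. A Clifford unitary is a unitary mapping each Pauli operator $P_{\vec a}$ under conjugation to a Pauli operator up to a scalar phase. *)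

theory Defs
  imports Complex_Main
begin

text \<open>n-qudit operators are represented as matrices indexed by computational basis
  states; a basis state is a function x :: nat => nat with x i < d for i < n and
  x i = 0 for i >= n.\<close>

type_synonym qop = "(nat \<Rightarrow> nat) \<Rightarrow> (nat \<Rightarrow> nat) \<Rightarrow> complex"

definition qbasis :: "nat \<Rightarrow> nat \<Rightarrow> (nat \<Rightarrow> nat) set" where
  "qbasis d n = {x. (\<forall>i<n. x i < d) \<and> (\<forall>i\<ge>n. x i = 0)}"

definition omega :: "nat \<Rightarrow> complex" where
  "omega d = exp (2 * of_real pi * \<i> / of_nat d)"

text \<open>Single-qudit Pauli X^s Z^t: X^s Z^t |k> = omega^(t k) |k+s mod d>.\<close>
definition pauli1 :: "nat \<Rightarrow> nat \<times> nat \<Rightarrow> nat \<Rightarrow> nat \<Rightarrow> complex" where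
  "pauli1 d a j k = (if j = (k + fst a) mod d then omega d ^ (snd a * k) else 0)"

definition pauli :: "nat \<Rightarrow> nat \<Rightarrow> (nat \<Rightarrow> nat \<times> nat) \<Rightarrow> qop" where
  "pauli d n a x y = (\<Prod>i<n. pauli1 d (a i) (x i) (y i))"

definition paulivecs :: "nat \<Rightarrow> nat \<Rightarrow> (nat \<Rightarrow> nat \<times> nat) set" where
  "paulivecs d n = {a. (\<forall>i<n. fst (a i) < d \<and> snd (a i) < d) \<and> (\<forall>i\<ge>n. a i = (0, 0))}"

definition pweight :: "nat \<Rightarrow> (nat \<Rightarrow> nat \<times> nat) \<Rightarrow> nat" where
  "pweight n a = card {i. i < n \<and> a i \<noteq> (0, 0)}"

definition qmul :: "nat \<Rightarrow> nat \<Rightarrow> qop \<Rightarrow> qop \<Rightarrow> qop" where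
  "qmul d n A B x y = (\<Sum>z\<in>qbasis d n. A x z * B z y)"

definition qadj :: "qop \<Rightarrow> qop" where
  "qadj A x y = cnj (A y x)"

definition qtr :: "nat \<Rightarrow> nat \<Rightarrow> qop \<Rightarrow> complex" where
  "qtr d n A = (\<Sum>x\<in>qbasis d n. A x x)"

definition qid :: qop where
  "qid x y = (if x = y then 1 else 0)"

definition qunitary :: "nat \<Rightarrow> nat \<Rightarrow> qop \<Rightarrow> bool" where
  "qunitary d n U \<longleftrightarrow>
     (\<forall>x\<in>qbasis d n. \<forall>y\<in>qbasis d n.
        qmul d n (qadj U) U x y = qid x y \<and> qmul d n U (qadj U) x y = qid x y)"

definition qconj :: "nat \<Rightarrow> nat \<Rightarrow> qop \<Rightarrow> qop \<Rightarrow> qop" where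
  "qconj d n U Q = qmul d n U (qmul d n Q (qadj U))"

definition pauli_prob :: "nat \<Rightarrow> nat \<Rightarrow> qop \<Rightarrow> (nat \<Rightarrow> nat \<times> nat) \<Rightarrow> real" where
  "pauli_prob d n Q a = (cmod (qtr d n (qmul d n Q (pauli d n a))))\<^sup>2 / real d ^ (2 * n)"

definition pauli_entropy :: "nat \<Rightarrow> nat \<Rightarrow> qop \<Rightarrow> real" where
  "pauli_entropy d n Q =
     - (\<Sum>a\<in>paulivecs d n. (let p = pauli_prob d n Q a in if p = 0 then 0 else p * ln p))"

definition magic :: "nat \<Rightarrow> nat \<Rightarrow> qop \<Rightarrow> real" where
  "magic d n U = Max ((\<lambda>a. pauli_entropy d n (qconj d n U (pauli d n a)))
                        ` {a \<in> paulivecs d n. pweight n a = 1})"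

definition clifford :: "nat \<Rightarrow> nat \<Rightarrow> qop \<Rightarrow> bool" where
  "clifford d n U \<longleftrightarrow> qunitary d n U \<and>
     (\<forall>a\<in>paulivecs d n. \<exists>b\<in>paulivecs d n. \<exists>c. cmod c = 1 \<and>
        (\<forall>x\<in>qbasis d n. \<forall>y\<in>qbasis d n.
           qconj d n U (pauli d n a) x y = c * pauli d n b x y))"

text \<open>U1 (on qudits 0..n1-1) tensor U2 (on the following qudits).\<close>
definition qtensor :: "nat \<Rightarrow> qop \<Rightarrow> qop \<Rightarrow> qop" where
  "qtensor n1 U1 U2 x y =
     U1 (\<lambda>i. if i < n1 then x i else 0) (\<lambda>i. if i < n1 then y i else 0)
     * U2 (\<lambda>i. x (i + n1)) (\<lambda>i. y (i + n1))"

end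

theory Submission
  imports Defs "HOL-Analysis.Complex_Transcendental" "HOL-Library.FuncSet"
begin

text \<open>
  The Pauli operators form an orthogonal basis of the operator space, so for every \<open>O\<close> with
  \<open>O O\<^sup>\<dagger> = 1\<close> the numbers \<open>P\<^sub>O[a]\<close> form a probability distribution (Parseval), and its
  entropy vanishes exactly when \<open>O\<close> is a single Pauli operator up to a phase. Thus \<open>M[U] = 0\<close>
  iff \<open>U\<close> maps every weight-one Pauli operator to a Pauli operator up to a phase; this extends
  to all Pauli operators, which are products of weight-one ones, because conjugation is
  multiplicative. A Clifford \<open>V\<close> permutes the Pauli labels up to phases, hence permutes the
  distribution and preserves its entropy. For \<open>U\<^sub>1 \<otimes> U\<^sub>2\<close> the weight-one Pauli operators are
  \<open>P \<otimes> 1\<close> and \<open>1 \<otimes> P\<close>; the distribution of a tensor product is the product distribution,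
  whose entropy is the sum of the entropies, and an identity factor contributes nothing.
\<close>

section \<open>Roots of unity and single-qudit Pauli operators\<close>

lemma omega_power: "omega d ^ j = exp (2 * of_real pi * \<i> * of_nat j / of_nat d)"
  unfolding omega_def by (simp add: exp_of_nat_mult[symmetric] algebra_simps)

lemma omega_power_eq_iff: "0 < d \<Longrightarrow> omega d ^ j = omega d ^ k \<longleftrightarrow> j mod d = k mod d"
  by (simp add: omega_power complex_root_unity_eq)

lemma omega_power_eq_1_iff: "0 < d \<Longrightarrow> omega d ^ j = 1 \<longleftrightarrow> d dvd j"
  by (simp add: omega_power complex_root_unity_eq_1)

lemma norm_omega_power [simp]: "cmod (omega d ^ k) = 1"
  by (simp add: omega_def norm_power norm_exp_eq_Re)

lemma omega_power_mult_cnj [simp]: "omega d ^ k * cnj (omega d) ^ k = 1"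
  using complex_norm_square[of "omega d ^ k"] by simp

lemma omega_orthogonality:
  assumes "0 < d" "j < d" "k < d"
  shows "(\<Sum>t<d. omega d ^ (t * j) * cnj (omega d ^ (t * k))) = (if j = k then of_nat d else 0)"
proof (cases "j = k")
  case True
  then show ?thesis
    by simp
next
  case False
  define z where "z = omega d ^ j * cnj (omega d ^ k)"
  have terms: "omega d ^ (t * j) * cnj (omega d ^ (t * k)) = z ^ t" for t
    unfolding z_def power_mult_distrib complex_cnj_power power_mult[symmetric] by (simp only: ac_simps)
  have "z ^ d = (omega d ^ d) ^ j * cnj ((omega d ^ d) ^ k)"
    unfolding z_def power_mult_distrib complex_cnj_power by (simp add: ac_simps flip: power_mult)
  also have "omega d ^ d = 1"
    using assms by (simp add: omega_power_eq_1_iff)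
  finally have "z ^ d = 1"
    by simp
  moreover have "z \<noteq> 1"
  proof
    assume "z = 1"
    then have "omega d ^ k = z * omega d ^ k"
      by simp
    also have "\<dots> = omega d ^ j * (omega d ^ k * cnj (omega d ^ k))"
      by (simp add: z_def ac_simps)
    also have "\<dots> = omega d ^ j"
      by simp
    finally show False
      using assms False by (simp add: omega_power_eq_iff)
  qed
  ultimately show ?thesis
    using False unfolding terms by (simp add: geometric_sum)
qed

lemma self_eq_add_mod_iff: "k < (d::nat) \<Longrightarrow> s < d \<Longrightarrow> k = (k + s) mod d \<longleftrightarrow> s = 0"
  by (cases "k + s < d") (auto simp: le_mod_geq)

lemma add_neg_mod_eq_0_iff: "s < (d::nat) \<Longrightarrow> t < d \<Longrightarrow> (s + (d - t) mod d) mod d = 0 \<longleftrightarrow> s = t"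
  by (cases "t = 0"; cases "s < t") (auto simp: le_mod_geq)

lemma sum_mod_shift:
  assumes "0 < (d::nat)"
  shows "(\<Sum>k<d. g ((k + s) mod d)) = (\<Sum>k<d. g k)"
proof -
  have inj: "inj_on (\<lambda>k. (k + s) mod d) {..<d}"
  proof (rule inj_onI)
    fix k k' assume "k \<in> {..<d}" "k' \<in> {..<d}" "(k + s) mod d = (k' + s) mod d"
    moreover from this(3) have "k mod d = k' mod d"
      by (simp add: nat_mod_eq_iff)
    ultimately show "k = k'"
      by simp
  qed
  moreover have "(\<lambda>k. (k + s) mod d) ` {..<d} = {..<d}"
    using assms by (intro endo_inj_surj[OF _ _ inj]) auto
  ultimately show ?thesis
    using sum.reindex[of "\<lambda>k. (k + s) mod d" "{..<d}" g] by simp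
qed

lemma pauli1_zero: "j < d \<Longrightarrow> k < d \<Longrightarrow> pauli1 d (0, 0) j k = (if j = k then 1 else 0)"
  by (simp add: pauli1_def)

lemma pauli1_mult:
  assumes "0 < d" "j < d" "l < d"
  shows "(\<Sum>k<d. pauli1 d (s, t) j k * pauli1 d (s', t') k l)
       = omega d ^ (t * s') * pauli1 d ((s + s') mod d, (t + t') mod d) j l"
proof -
  let ?k = "(l + s') mod d"
  have "(\<Sum>k<d. pauli1 d (s, t) j k * pauli1 d (s', t') k l)
      = (\<Sum>k<d. if k = ?k then pauli1 d (s, t) j ?k * omega d ^ (t' * l) else 0)"
    by (rule sum.cong) (auto simp: pauli1_def)
  also have "\<dots> = pauli1 d (s, t) j ?k * omega d ^ (t' * l)"
    using assms by simp
  also have "\<dots> = omega d ^ (t * s') * pauli1 d ((s + s') mod d, (t + t') mod d) j l"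
  proof -
    have "(?k + s) mod d = (l + (s + s') mod d) mod d"
      by (metis add.assoc add.commute mod_add_left_eq mod_add_right_eq)
    moreover have "omega d ^ (t * ?k) = omega d ^ (t * (l + s'))"
      using assms(1) by (subst omega_power_eq_iff) (simp_all add: mod_mult_right_eq)
    moreover have "omega d ^ (((t + t') mod d) * l) = omega d ^ ((t + t') * l)"
      using assms(1) by (subst omega_power_eq_iff) (simp_all add: mod_mult_left_eq)
    moreover have "omega d ^ (t * (l + s')) * omega d ^ (t' * l)
        = omega d ^ (t * s') * omega d ^ ((t + t') * l)"
      by (simp add: algebra_simps flip: power_add)
    ultimately show ?thesis
      by (simp add: pauli1_def)
  qed
  finally show ?thesis .
qed

lemma pauli1_mult_adj:
  assumes "0 < d" "j < d" "j' < d"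
  shows "(\<Sum>k<d. pauli1 d a j k * cnj (pauli1 d a j' k)) = (if j = j' then 1 else 0)"
proof -
  define g where "g m = (if m = j then if j = j' then 1 else 0 else (0::complex))" for m
  have "(\<Sum>k<d. pauli1 d a j k * cnj (pauli1 d a j' k)) = (\<Sum>k<d. g ((k + fst a) mod d))"
    by (rule sum.cong) (auto simp: pauli1_def g_def)
  also have "\<dots> = (\<Sum>m<d. g m)"
    using assms(1) by (rule sum_mod_shift)
  also have "\<dots> = (if j = j' then 1 else 0)"
    using assms(2) by (simp add: g_def)
  finally show ?thesis .
qed

lemma pauli1_trace:
  assumes "0 < d" "fst a < d" "snd a < d"
  shows "(\<Sum>k<d. pauli1 d a k k) = (if a = (0, 0) then of_nat d else 0)"
proof (cases "fst a = 0")
  case True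
  have "(\<Sum>k<d. pauli1 d a k k) = (\<Sum>k<d. omega d ^ (k * snd a) * cnj (omega d ^ (k * 0)))"
    using True by (simp add: pauli1_def mult.commute)
  also have "\<dots> = (if snd a = 0 then of_nat d else 0)"
    using assms by (simp only: omega_orthogonality)
  finally show ?thesis
    using True by (simp add: prod_eq_iff)
next
  case False
  have "pauli1 d a k k = 0" if "k < d" for k
    using self_eq_add_mod_iff[OF that assms(2)] False by (simp add: pauli1_def)
  then show ?thesis
    using False by (auto simp: prod_eq_iff)
qed

lemma pauli1_completeness:
  assumes "0 < d" "j < d" "k < d" "j' < d" "k' < d"
  shows "(\<Sum>a\<in>{..<d} \<times> {..<d}. pauli1 d a j k * cnj (pauli1 d a j' k'))
       = (if j = j' \<and> k = k' then of_nat d else 0)"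
proof -
  define g where "g m = (if m = j then if j = j' \<and> k = k' then of_nat d else 0 else (0::complex))" for m
  have "(\<Sum>a\<in>{..<d} \<times> {..<d}. pauli1 d a j k * cnj (pauli1 d a j' k'))
      = (\<Sum>s<d. \<Sum>t<d. pauli1 d (s, t) j k * cnj (pauli1 d (s, t) j' k'))"
    by (simp add: sum.cartesian_product)
  also have "\<dots> = (\<Sum>s<d. if j = (k + s) mod d \<and> j' = (k' + s) mod d
                then (\<Sum>t<d. omega d ^ (t * k) * cnj (omega d ^ (t * k'))) else 0)"
    by (rule sum.cong) (auto simp: pauli1_def mult.commute)
  also have "\<dots> = (\<Sum>s<d. if j = (k + s) mod d \<and> j' = (k' + s) mod d
                       then (if k = k' then of_nat d else 0) else 0)"
    using assms by (simp only: omega_orthogonality)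
  also have "\<dots> = (\<Sum>s<d. g ((s + k) mod d))"
    by (rule sum.cong) (auto simp: g_def add.commute)
  also have "\<dots> = (\<Sum>m<d. g m)"
    using assms(1) by (rule sum_mod_shift)
  also have "\<dots> = (if j = j' \<and> k = k' then of_nat d else 0)"
    using assms(2) by (auto simp: g_def)
  finally show ?thesis .
qed

section \<open>Basis states and Pauli labels as padded sequences\<close>

definition padded_seqs :: "'a set \<Rightarrow> 'a \<Rightarrow> nat \<Rightarrow> (nat \<Rightarrow> 'a) set" where
  "padded_seqs A z n = {x. (\<forall>i<n. x i \<in> A) \<and> (\<forall>i\<ge>n. x i = z)}"

lemma qbasis_eq_padded_seqs: "qbasis d n = padded_seqs {..<d} 0 n"
  by (auto simp: qbasis_def padded_seqs_def)

lemma paulivecs_eq_padded_seqs: "paulivecs d n = padded_seqs ({..<d} \<times> {..<d}) (0, 0) n"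
  by (auto simp: paulivecs_def padded_seqs_def mem_Times_iff)

lemma padded_seqs_eqI:
  assumes "x \<in> padded_seqs A z n" "y \<in> padded_seqs A z n" "\<And>i. i < n \<Longrightarrow> x i = y i"
  shows "x = y"
proof
  fix i
  show "x i = y i"
    using assms by (cases "i < n") (auto simp: padded_seqs_def)
qed

lemma bij_betw_padded_seqs_PiE:
  "bij_betw (\<lambda>x. restrict x {..<n}) (padded_seqs A z n) (PiE {..<n} (\<lambda>_. A))"
  by (rule bij_betw_byWitness[where f' = "\<lambda>x i. if i < n then x i else z"])
     (auto simp: padded_seqs_def PiE_def extensional_def fun_eq_iff)

lemma finite_padded_seqs: "finite A \<Longrightarrow> finite (padded_seqs A z n)"
  by (metis bij_betw_finite bij_betw_padded_seqs_PiE finite_PiE finite_lessThan)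

lemma sum_prod_padded_seqs:
  fixes f :: "nat \<Rightarrow> 'a \<Rightarrow> 'b::comm_semiring_1"
  assumes "finite A"
  shows "(\<Sum>x\<in>padded_seqs A z n. \<Prod>i<n. f i (x i)) = (\<Prod>i<n. \<Sum>k\<in>A. f i k)"
proof -
  have "(\<Sum>x\<in>padded_seqs A z n. \<Prod>i<n. f i (x i))
      = (\<Sum>x\<in>padded_seqs A z n. \<Prod>i<n. f i (restrict x {..<n} i))"
    by simp
  also have "\<dots> = (\<Sum>g\<in>PiE {..<n} (\<lambda>_. A). \<Prod>i<n. f i (g i))"
    by (rule sum.reindex_bij_betw[OF bij_betw_padded_seqs_PiE, of "\<lambda>g. \<Prod>i<n. f i (g i)"])
  also have "\<dots> = (\<Prod>i<n. \<Sum>k\<in>A. f i k)"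
    using assms by (simp add: prod_sum_PiE)
  finally show ?thesis .
qed

definition seq_append :: "nat \<Rightarrow> (nat \<Rightarrow> 'a) \<Rightarrow> (nat \<Rightarrow> 'a) \<Rightarrow> nat \<Rightarrow> 'a" where
  "seq_append m x y = (\<lambda>i. if i < m then x i else y (i - m))"

lemma bij_betw_seq_append:
  "bij_betw (\<lambda>(x, y). seq_append m x y)
     (padded_seqs A z m \<times> padded_seqs A z n) (padded_seqs A z (m + n))"
  by (rule bij_betw_byWitness[where f' = "\<lambda>x. (\<lambda>i. if i < m then x i else z, \<lambda>i. x (i + m))"])
     (auto simp: padded_seqs_def seq_append_def fun_eq_iff)

lemma sum_padded_seqs_add:
  "(\<Sum>x\<in>padded_seqs A z (m + n). g x)
     = (\<Sum>x\<in>padded_seqs A z m. \<Sum>y\<in>padded_seqs A z n. g (seq_append m x y))"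
  by (simp add: sum.reindex_bij_betw[OF bij_betw_seq_append, symmetric] sum.cartesian_product
      split_def)

lemma finite_qbasis [simp]: "finite (qbasis d n)"
  by (simp add: qbasis_eq_padded_seqs finite_padded_seqs)

lemma finite_paulivecs [simp]: "finite (paulivecs d n)"
  by (simp add: paulivecs_eq_padded_seqs finite_padded_seqs)

lemma card_qbasis: "card (qbasis d n) = d ^ n"
  using sum_prod_padded_seqs[where f = "\<lambda>_ _. 1 :: nat" and A = "{..<d}" and z = 0 and n = n]
  by (simp add: qbasis_eq_padded_seqs)

lemma sum_prod_qbasis:
  fixes f :: "nat \<Rightarrow> nat \<Rightarrow> 'a::comm_semiring_1"
  shows "(\<Sum>x\<in>qbasis d n. \<Prod>i<n. f i (x i)) = (\<Prod>i<n. \<Sum>k<d. f i k)"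
  by (simp add: qbasis_eq_padded_seqs sum_prod_padded_seqs)

section \<open>Operators on the computational basis\<close>

text \<open>Operators are total functions, but only their entries on basis states are meaningful;
  \<open>qeq\<close> identifies operators that agree there.\<close>

definition qeq :: "nat \<Rightarrow> nat \<Rightarrow> qop \<Rightarrow> qop \<Rightarrow> bool" where
  "qeq d n A B \<longleftrightarrow> (\<forall>x\<in>qbasis d n. \<forall>y\<in>qbasis d n. A x y = B x y)"

lemma qeq_refl [simp]: "qeq d n A A"
  by (simp add: qeq_def)

lemma qeq_sym: "qeq d n A B \<Longrightarrow> qeq d n B A"
  by (simp add: qeq_def)

lemma qeq_trans [trans]: "qeq d n A B \<Longrightarrow> qeq d n B C \<Longrightarrow> qeq d n A C"
  by (simp add: qeq_def)

lemma qeq_qmul: "qeq d n A A' \<Longrightarrow> qeq d n B B' \<Longrightarrow> qeq d n (qmul d n A B) (qmul d n A' B')"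
  by (simp add: qeq_def qmul_def)

lemma qeq_scale: "qeq d n A B \<Longrightarrow> qeq d n (\<lambda>x y. c * A x y) (\<lambda>x y. c * B x y)"
  by (simp add: qeq_def)

lemma qtr_qeq: "qeq d n A B \<Longrightarrow> qtr d n A = qtr d n B"
  by (simp add: qeq_def qtr_def)

lemma qmul_assoc: "qmul d n (qmul d n A B) C = qmul d n A (qmul d n B C)"
  unfolding fun_eq_iff qmul_def
  by (simp add: sum_distrib_left sum_distrib_right mult.assoc) (rule allI sum.swap)+

lemma qadj_qmul: "qadj (qmul d n A B) = qmul d n (qadj B) (qadj A)"
  by (simp add: fun_eq_iff qadj_def qmul_def mult.commute)

lemma qadj_qadj [simp]: "qadj (qadj A) = A"
  by (simp add: fun_eq_iff qadj_def)

lemma qmul_qid_left: "qeq d n (qmul d n qid A) A"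
  unfolding qeq_def qmul_def qid_def by (simp add: if_distrib[of "\<lambda>c. c * _"] cong: if_cong)

lemma qmul_qid_right: "qeq d n (qmul d n A qid) A"
  unfolding qeq_def qmul_def qid_def by (simp add: if_distrib[of "\<lambda>c. _ * c"] cong: if_cong)

lemma qmul_scale_left: "qmul d n (\<lambda>x y. c * A x y) B = (\<lambda>x y. c * qmul d n A B x y)"
  by (simp add: fun_eq_iff qmul_def sum_distrib_left mult.assoc)

lemma qmul_scale_right: "qmul d n A (\<lambda>x y. c * B x y) = (\<lambda>x y. c * qmul d n A B x y)"
  by (simp add: fun_eq_iff qmul_def sum_distrib_left mult.left_commute)

lemma qtr_scale: "qtr d n (\<lambda>x y. c * A x y) = c * qtr d n A"
  by (simp add: qtr_def sum_distrib_left)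

lemma qtr_qmul_commute: "qtr d n (qmul d n A B) = qtr d n (qmul d n B A)"
  unfolding qtr_def qmul_def by (subst sum.swap) (simp add: mult.commute)

lemma qmul_cancel_left: "qeq d n (qmul d n A B) qid \<Longrightarrow> qeq d n (qmul d n A (qmul d n B C)) C"
  unfolding qmul_assoc[symmetric] by (rule qeq_trans[OF qeq_qmul[OF _ qeq_refl] qmul_qid_left])

lemma qmul_cancel_right: "qeq d n (qmul d n B C) qid \<Longrightarrow> qeq d n (qmul d n A (qmul d n B C)) A"
  by (rule qeq_trans[OF qeq_qmul[OF qeq_refl] qmul_qid_right])

lemma qunitary_iff_qeq:
  "qunitary d n U \<longleftrightarrow> qeq d n (qmul d n (qadj U) U) qid \<and> qeq d n (qmul d n U (qadj U)) qid"
  by (auto simp: qunitary_def qeq_def)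

lemma qconj_cong: "qeq d n A B \<Longrightarrow> qeq d n (qconj d n U A) (qconj d n U B)"
  unfolding qconj_def by (simp add: qeq_qmul)

lemma qconj_scale: "qconj d n U (\<lambda>x y. c * A x y) = (\<lambda>x y. c * qconj d n U A x y)"
  by (simp add: qconj_def qmul_scale_left qmul_scale_right)

lemma qconj_qmul_left: "qconj d n (qmul d n V U) A = qconj d n V (qconj d n U A)"
  by (simp add: qconj_def qadj_qmul qmul_assoc)

lemma qconj_qmul:
  assumes "qunitary d n U"
  shows "qeq d n (qconj d n U (qmul d n A B)) (qmul d n (qconj d n U A) (qconj d n U B))"
proof -
  have "qeq d n (qmul d n (qadj U) (qmul d n U (qmul d n B (qadj U)))) (qmul d n B (qadj U))"
    using assms by (simp add: qunitary_iff_qeq qmul_cancel_left)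
  then show ?thesis
    unfolding qconj_def qmul_assoc by (rule qeq_qmul[OF qeq_refl qeq_qmul[OF qeq_refl qeq_sym]])
qed

lemma qconj_qid:
  assumes "qunitary d n U" "qeq d n A qid"
  shows "qeq d n (qconj d n U A) qid"
proof -
  have "qeq d n (qconj d n U A) (qmul d n U (qmul d n qid (qadj U)))"
    unfolding qconj_def using assms(2) by (rule qeq_qmul[OF qeq_refl qeq_qmul[OF _ qeq_refl]])
  also have "qeq d n \<dots> (qmul d n U (qadj U))"
    by (rule qeq_qmul[OF qeq_refl qmul_qid_left])
  also have "qeq d n \<dots> qid"
    using assms(1) by (simp add: qunitary_iff_qeq)
  finally show ?thesis .
qed

lemma qconj_adj_qconj:
  assumes "qunitary d n U"
  shows "qeq d n (qconj d n (qadj U) (qconj d n U A)) A"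
proof -
  have "qeq d n (qconj d n (qadj U) (qconj d n U A))
      (qmul d n (qadj U) (qmul d n U (qmul d n A (qmul d n (qadj U) U))))"
    by (simp add: qconj_def qmul_assoc)
  also have "qeq d n \<dots> (qmul d n A (qmul d n (qadj U) U))"
    using assms unfolding qunitary_iff_qeq by (intro qmul_cancel_left) simp
  also have "qeq d n \<dots> A"
    using assms unfolding qunitary_iff_qeq by (intro qmul_cancel_right) simp
  finally show ?thesis .
qed

lemma qconj_adj_eq_scale:
  assumes "qunitary d n U" "cmod c = 1" "qeq d n (qconj d n U A) (\<lambda>x y. c * B x y)"
  shows "qeq d n (qconj d n (qadj U) B) (\<lambda>x y. cnj c * A x y)"
proof -
  have "qeq d n A (qconj d n (qadj U) (qconj d n U A))"
    by (rule qeq_sym[OF qconj_adj_qconj[OF assms(1)]])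
  also have "qeq d n \<dots> (\<lambda>x y. c * qconj d n (qadj U) B x y)"
    unfolding qconj_scale[symmetric] by (rule qconj_cong[OF assms(3)])
  finally have "qeq d n (\<lambda>x y. cnj c * A x y) (\<lambda>x y. (cnj c * c) * qconj d n (qadj U) B x y)"
    unfolding mult.assoc by (rule qeq_scale)
  moreover have "cnj c * c = 1"
    using complex_norm_square[of c] assms(2) by (simp add: mult.commute)
  ultimately show ?thesis
    by (simp add: qeq_sym)
qed

lemma qconj_mult_adj:
  assumes "qunitary d n U" "qeq d n (qmul d n Q (qadj Q)) qid"
  shows "qeq d n (qmul d n (qconj d n U Q) (qadj (qconj d n U Q))) qid"
proof -
  have "qeq d n (qmul d n (qconj d n U Q) (qadj (qconj d n U Q)))
      (qmul d n U (qmul d n Q (qmul d n (qadj U) (qmul d n U (qmul d n (qadj Q) (qadj U))))))"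
    by (simp add: qconj_def qadj_qmul qmul_assoc)
  also have "qeq d n \<dots> (qmul d n U (qmul d n Q (qmul d n (qadj Q) (qadj U))))"
    using assms(1) unfolding qunitary_iff_qeq
    by (intro qeq_qmul[OF qeq_refl qeq_qmul[OF qeq_refl qmul_cancel_left]]) simp
  also have "qeq d n \<dots> (qmul d n U (qadj U))"
    using assms(2) by (rule qeq_qmul[OF qeq_refl qmul_cancel_left])
  also have "qeq d n \<dots> qid"
    using assms(1) by (simp add: qunitary_iff_qeq)
  finally show ?thesis .
qed

lemma qtr_qmul_qconj: "qtr d n (qmul d n (qconj d n V Q) M) = qtr d n (qmul d n Q (qconj d n (qadj V) M))"
  unfolding qconj_def qadj_qadj qmul_assoc
  by (subst qtr_qmul_commute) (simp add: qmul_assoc)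

section \<open>Pauli operators and Pauli spectra\<close>

definition label_add :: "nat \<Rightarrow> (nat \<Rightarrow> nat \<times> nat) \<Rightarrow> (nat \<Rightarrow> nat \<times> nat) \<Rightarrow> nat \<Rightarrow> nat \<times> nat" where
  "label_add d a b = (\<lambda>i. ((fst (a i) + fst (b i)) mod d, (snd (a i) + snd (b i)) mod d))"

definition label_neg :: "nat \<Rightarrow> (nat \<Rightarrow> nat \<times> nat) \<Rightarrow> nat \<Rightarrow> nat \<times> nat" where
  "label_neg d a = (\<lambda>i. ((d - fst (a i)) mod d, (d - snd (a i)) mod d))"

definition label_zero :: "nat \<Rightarrow> nat \<times> nat" where
  "label_zero = (\<lambda>_. (0, 0))"

lemma label_add_mem_paulivecs:
  "0 < d \<Longrightarrow> a \<in> paulivecs d n \<Longrightarrow> b \<in> paulivecs d n \<Longrightarrow> label_add d a b \<in> paulivecs d n"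
  by (simp add: paulivecs_def label_add_def)

lemma label_neg_mem_paulivecs: "0 < d \<Longrightarrow> a \<in> paulivecs d n \<Longrightarrow> label_neg d a \<in> paulivecs d n"
  by (simp add: paulivecs_def label_neg_def)

lemma label_zero_mem_paulivecs: "0 < d \<Longrightarrow> label_zero \<in> paulivecs d n"
  by (simp add: paulivecs_def label_zero_def)

lemma label_add_commute: "label_add d a b = label_add d b a"
  by (simp add: label_add_def add.commute)

lemma label_add_neg_eq_zero_iff:
  assumes "a \<in> paulivecs d n" "b \<in> paulivecs d n"
  shows "label_add d a (label_neg d b) = label_zero \<longleftrightarrow> a = b"
proof -
  have "label_add d a (label_neg d b) = label_zero \<longleftrightarrow> (\<forall>i<n. a i = b i)"
  proof -
    have "label_add d a (label_neg d b) i = (0, 0) \<longleftrightarrow> a i = b i" if "i < n" for i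
      using assms that add_neg_mod_eq_0_iff[of "fst (a i)" d "fst (b i)"]
        add_neg_mod_eq_0_iff[of "snd (a i)" d "snd (b i)"]
      by (auto simp: paulivecs_def label_add_def label_neg_def prod_eq_iff)
    moreover have "label_add d a (label_neg d b) i = (0, 0)" if "\<not> i < n" for i
      using assms that by (simp add: paulivecs_def label_add_def label_neg_def)
    ultimately show ?thesis
      unfolding label_zero_def fun_eq_iff by metis
  qed
  also have "\<dots> \<longleftrightarrow> a = b"
    using assms unfolding paulivecs_eq_padded_seqs by (blast intro: padded_seqs_eqI)
  finally show ?thesis .
qed

definition pauli_phase :: "nat \<Rightarrow> nat \<Rightarrow> (nat \<Rightarrow> nat \<times> nat) \<Rightarrow> (nat \<Rightarrow> nat \<times> nat) \<Rightarrow> complex" where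
  "pauli_phase d n a b = (\<Prod>i<n. omega d ^ (snd (a i) * fst (b i)))"

lemma norm_pauli_phase [simp]: "cmod (pauli_phase d n a b) = 1"
  by (simp add: pauli_phase_def prod_norm[symmetric])

lemma pauli_phase_nonzero [simp]: "pauli_phase d n a b \<noteq> 0"
  using norm_pauli_phase[of d n a b] by force

lemma pauli_mult:
  assumes "0 < d"
  shows "qeq d n (qmul d n (pauli d n a) (pauli d n b))
           (\<lambda>x y. pauli_phase d n a b * pauli d n (label_add d a b) x y)"
  unfolding qeq_def
proof (intro ballI)
  fix x y assume x: "x \<in> qbasis d n" and y: "y \<in> qbasis d n"
  have "qmul d n (pauli d n a) (pauli d n b) x y
      = (\<Sum>z\<in>qbasis d n. \<Prod>i<n. pauli1 d (a i) (x i) (z i) * pauli1 d (b i) (z i) (y i))"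
    by (simp add: qmul_def pauli_def prod.distrib)
  also have "\<dots> = (\<Prod>i<n. \<Sum>k<d. pauli1 d (a i) (x i) k * pauli1 d (b i) k (y i))"
    by (rule sum_prod_qbasis)
  also have "\<dots> = (\<Prod>i<n. omega d ^ (snd (a i) * fst (b i)) * pauli1 d (label_add d a b i) (x i) (y i))"
  proof (rule prod.cong[OF refl])
    fix i assume "i \<in> {..<n}"
    then have "x i < d" "y i < d"
      using x y by (auto simp: qbasis_def)
    then show "(\<Sum>k<d. pauli1 d (a i) (x i) k * pauli1 d (b i) k (y i))
        = omega d ^ (snd (a i) * fst (b i)) * pauli1 d (label_add d a b i) (x i) (y i)"
      using pauli1_mult[OF assms, of "x i" "y i" "fst (a i)" "snd (a i)" "fst (b i)" "snd (b i)"]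
      by (simp add: label_add_def)
  qed
  also have "\<dots> = pauli_phase d n a b * pauli d n (label_add d a b) x y"
    by (simp add: prod.distrib pauli_phase_def pauli_def)
  finally show "qmul d n (pauli d n a) (pauli d n b) x y
      = pauli_phase d n a b * pauli d n (label_add d a b) x y" .
qed

lemma prod_lessThan_if_const:
  "(\<Prod>i<n. if P i then c else 0) = (if \<forall>i<n. P i then c ^ n else (0::'a::comm_semiring_1))"
  by (induction n) (auto simp: less_Suc_eq mult.commute)

lemma prod_eq_qid:
  assumes "x \<in> qbasis d n" "y \<in> qbasis d n"
  shows "(\<Prod>i<n. if x i = y i then 1 else 0) = qid x y"
  using assms unfolding prod_lessThan_if_const qbasis_eq_padded_seqs
  by (auto simp: qid_def intro: padded_seqs_eqI)

lemma pauli_mult_adj: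
  assumes "0 < d"
  shows "qeq d n (qmul d n (pauli d n a) (qadj (pauli d n a))) qid"
  unfolding qeq_def
proof (intro ballI)
  fix x y assume x: "x \<in> qbasis d n" and y: "y \<in> qbasis d n"
  have "qmul d n (pauli d n a) (qadj (pauli d n a)) x y
      = (\<Sum>z\<in>qbasis d n. \<Prod>i<n. pauli1 d (a i) (x i) (z i) * cnj (pauli1 d (a i) (y i) (z i)))"
    by (simp add: qmul_def qadj_def pauli_def prod.distrib)
  also have "\<dots> = (\<Prod>i<n. \<Sum>k<d. pauli1 d (a i) (x i) k * cnj (pauli1 d (a i) (y i) k))"
    by (rule sum_prod_qbasis)
  also have "\<dots> = (\<Prod>i<n. if x i = y i then 1 else 0)"
    using x y assms by (intro prod.cong refl) (simp add: qbasis_def pauli1_mult_adj)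
  also have "\<dots> = qid x y"
    using x y by (rule prod_eq_qid)
  finally show "qmul d n (pauli d n a) (qadj (pauli d n a)) x y = qid x y" .
qed

lemma pauli_label_zero: "qeq d n (pauli d n label_zero) qid"
  unfolding qeq_def
proof (intro ballI)
  fix x y assume x: "x \<in> qbasis d n" and y: "y \<in> qbasis d n"
  have "pauli d n label_zero x y = (\<Prod>i<n. if x i = y i then 1 else 0)"
    unfolding pauli_def using x y by (intro prod.cong refl) (simp add: qbasis_def label_zero_def pauli1_zero)
  then show "pauli d n label_zero x y = qid x y"
    using prod_eq_qid[OF x y] by simp
qed

lemma qtr_pauli:
  assumes "0 < d" "a \<in> paulivecs d n"
  shows "qtr d n (pauli d n a) = (if a = label_zero then of_nat d ^ n else 0)"
proof -
  have "qtr d n (pauli d n a) = (\<Prod>i<n. \<Sum>k<d. pauli1 d (a i) k k)"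
    unfolding qtr_def pauli_def by (rule sum_prod_qbasis)
  also have "\<dots> = (\<Prod>i<n. if a i = (0, 0) then of_nat d else 0)"
    using assms by (intro prod.cong refl) (simp add: paulivecs_def pauli1_trace)
  also have "\<dots> = (if a = label_zero then of_nat d ^ n else 0)"
  proof -
    have "(\<forall>i<n. a i = (0, 0)) \<longleftrightarrow> a = label_zero"
      using assms(2) label_zero_mem_paulivecs[OF assms(1)] unfolding paulivecs_eq_padded_seqs
      by (auto simp: label_zero_def intro: padded_seqs_eqI)
    then show ?thesis
      by (simp add: prod_lessThan_if_const)
  qed
  finally show ?thesis .
qed

lemma qtr_pauli_mult:
  assumes "0 < d" "a \<in> paulivecs d n" "b \<in> paulivecs d n"
  shows "qtr d n (qmul d n (pauli d n a) (pauli d n b))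
       = (if label_add d a b = label_zero then pauli_phase d n a b * of_nat d ^ n else 0)"
proof -
  have "qtr d n (qmul d n (pauli d n a) (pauli d n b))
      = pauli_phase d n a b * qtr d n (pauli d n (label_add d a b))"
    using qtr_qeq[OF pauli_mult[OF assms(1)]] by (simp add: qtr_scale)
  then show ?thesis
    using assms by (simp add: qtr_pauli label_add_mem_paulivecs)
qed

lemma qadj_pauli:
  assumes "0 < d" "a \<in> paulivecs d n"
  defines "c \<equiv> pauli_phase d n (label_neg d a) a"
  shows "qeq d n (qadj (pauli d n a)) (\<lambda>x y. cnj c * pauli d n (label_neg d a) x y)"
proof -
  let ?b = "label_neg d a"
  have zero: "label_add d ?b a = label_zero"
    using assms by (simp add: label_add_commute label_add_neg_eq_zero_iff)
  have "qeq d n (pauli d n ?b) (qmul d n (pauli d n ?b) (qmul d n (pauli d n a) (qadj (pauli d n a))))"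
    using assms(1) by (rule qeq_sym[OF qmul_cancel_right[OF pauli_mult_adj]])
  also have "qeq d n \<dots> (qmul d n (\<lambda>x y. c * pauli d n label_zero x y) (qadj (pauli d n a)))"
    unfolding qmul_assoc[symmetric] c_def
    by (rule qeq_qmul[OF _ qeq_refl])
      (use pauli_mult[OF assms(1), where a = "label_neg d a" and b = a] zero in simp)
  also have "qeq d n \<dots> (\<lambda>x y. c * qadj (pauli d n a) x y)"
    unfolding qmul_scale_left
    by (rule qeq_scale[OF qeq_trans[OF qeq_qmul[OF pauli_label_zero qeq_refl] qmul_qid_left]])
  finally have "qeq d n (\<lambda>x y. cnj c * pauli d n ?b x y) (\<lambda>x y. cnj c * (c * qadj (pauli d n a) x y))"
    by (rule qeq_scale)
  moreover have "cnj c * c = 1"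
    using complex_norm_square[of c] by (simp add: c_def mult.commute)
  ultimately show ?thesis
    by (simp add: qeq_def mult.assoc[symmetric])
qed

lemma pauli_completeness:
  assumes "0 < d" "x \<in> qbasis d n" "y \<in> qbasis d n" "x' \<in> qbasis d n" "y' \<in> qbasis d n"
  shows "(\<Sum>b\<in>paulivecs d n. pauli d n b y x * cnj (pauli d n b y' x'))
       = (if x = x' \<and> y = y' then of_nat d ^ n else 0)"
proof -
  have "(\<Sum>b\<in>paulivecs d n. pauli d n b y x * cnj (pauli d n b y' x'))
      = (\<Prod>i<n. \<Sum>a\<in>{..<d} \<times> {..<d}. pauli1 d a (y i) (x i) * cnj (pauli1 d a (y' i) (x' i)))"
    unfolding paulivecs_eq_padded_seqs pauli_def cnj_prod prod.distrib[symmetric]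
    by (rule sum_prod_padded_seqs[where
          f = "\<lambda>i a. pauli1 d a (y i) (x i) * cnj (pauli1 d a (y' i) (x' i))"]) simp
  also have "\<dots> = (\<Prod>i<n. if x i = x' i \<and> y i = y' i then of_nat d else 0)"
    using assms by (intro prod.cong refl) (auto simp: qbasis_def pauli1_completeness)
  also have "\<dots> = (if x = x' \<and> y = y' then of_nat d ^ n else 0)"
    using assms unfolding prod_lessThan_if_const qbasis_eq_padded_seqs
    by (auto intro: padded_seqs_eqI)
  finally show ?thesis .
qed

lemma pauli_eq_scaled_pauli_imp_eq:
  assumes "0 < d" "a \<in> paulivecs d n" "a' \<in> paulivecs d n"
    and "qeq d n (pauli d n a) (\<lambda>x y. c * pauli d n a' x y)"
  shows "a = a'"
proof -
  \<comment> \<open>Under the trace pairing, the Pauli operator with label \<open>label_neg d a\<close> detects the label \<open>a\<close>.\<close>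
  let ?b = "label_neg d a"
  have b: "?b \<in> paulivecs d n"
    using assms by (simp add: label_neg_mem_paulivecs)
  have "qtr d n (qmul d n (pauli d n a) (pauli d n ?b)) \<noteq> 0"
    using assms b by (simp add: qtr_pauli_mult label_add_neg_eq_zero_iff)
  moreover have "qtr d n (qmul d n (pauli d n a) (pauli d n ?b))
      = c * qtr d n (qmul d n (pauli d n a') (pauli d n ?b))"
    using qtr_qeq[OF qeq_qmul[OF assms(4) qeq_refl]] by (simp add: qmul_scale_left qtr_scale)
  ultimately have "label_add d a' ?b = label_zero"
    using assms b by (auto simp: qtr_pauli_mult split: if_splits)
  then show ?thesis
    using assms by (simp add: label_add_neg_eq_zero_iff)
qed

definition phased_pauli :: "nat \<Rightarrow> nat \<Rightarrow> qop \<Rightarrow> bool" where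
  "phased_pauli d n Q \<longleftrightarrow>
     (\<exists>b\<in>paulivecs d n. \<exists>c. cmod c = 1 \<and> qeq d n Q (\<lambda>x y. c * pauli d n b x y))"

lemma clifford_iff_phased_pauli:
  "clifford d n U \<longleftrightarrow> qunitary d n U \<and> (\<forall>a\<in>paulivecs d n. phased_pauli d n (qconj d n U (pauli d n a)))"
  by (simp add: clifford_def phased_pauli_def qeq_def)

lemma phased_pauli_pauli: "b \<in> paulivecs d n \<Longrightarrow> phased_pauli d n (pauli d n b)"
  unfolding phased_pauli_def by (intro bexI[of _ b] exI[of _ 1]) simp_all

lemma phased_pauli_cong:
  assumes "qeq d n A B" "phased_pauli d n A"
  shows "phased_pauli d n B"
proof -
  obtain b c where "b \<in> paulivecs d n" "cmod c = 1" "qeq d n A (\<lambda>x y. c * pauli d n b x y)"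
    using assms(2) unfolding phased_pauli_def by blast
  moreover from this(3) have "qeq d n B (\<lambda>x y. c * pauli d n b x y)"
    by (rule qeq_trans[OF qeq_sym[OF assms(1)]])
  ultimately show ?thesis
    unfolding phased_pauli_def by blast
qed

lemma phased_pauli_scale:
  assumes "cmod c = 1" "phased_pauli d n A"
  shows "phased_pauli d n (\<lambda>x y. c * A x y)"
proof -
  obtain b c' where "b \<in> paulivecs d n" "cmod c' = 1" "qeq d n A (\<lambda>x y. c' * pauli d n b x y)"
    using assms(2) unfolding phased_pauli_def by blast
  moreover from this(3) have "qeq d n (\<lambda>x y. c * A x y) (\<lambda>x y. (c * c') * pauli d n b x y)"
    by (simp add: qeq_def mult.assoc)
  ultimately show ?thesis
    using assms(1) unfolding phased_pauli_def by (metis norm_mult mult_1)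
qed

lemma phased_pauli_qmul:
  assumes "0 < d" "phased_pauli d n A" "phased_pauli d n B"
  shows "phased_pauli d n (qmul d n A B)"
proof -
  obtain a c where a: "a \<in> paulivecs d n" "cmod c = 1" "qeq d n A (\<lambda>x y. c * pauli d n a x y)"
    using assms(2) unfolding phased_pauli_def by blast
  obtain b c' where b: "b \<in> paulivecs d n" "cmod c' = 1" "qeq d n B (\<lambda>x y. c' * pauli d n b x y)"
    using assms(3) unfolding phased_pauli_def by blast
  have "qeq d n (qmul d n A B) (\<lambda>x y. c * c' * qmul d n (pauli d n a) (pauli d n b) x y)"
    using qeq_qmul[OF a(3) b(3)] by (simp add: qmul_scale_left qmul_scale_right mult.assoc)
  moreover have "phased_pauli d n (\<lambda>x y. c * c' * qmul d n (pauli d n a) (pauli d n b) x y)"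
    using assms(1) a b
    by (intro phased_pauli_scale phased_pauli_cong[OF qeq_sym[OF pauli_mult]] phased_pauli_scale
        phased_pauli_pauli label_add_mem_paulivecs) (simp_all add: norm_mult)
  ultimately show ?thesis
    by (rule phased_pauli_cong[OF qeq_sym])
qed

definition pauli_coeff :: "nat \<Rightarrow> nat \<Rightarrow> qop \<Rightarrow> (nat \<Rightarrow> nat \<times> nat) \<Rightarrow> complex" where
  "pauli_coeff d n Q b = qtr d n (qmul d n Q (pauli d n b))"

lemma pauli_prob_eq: "pauli_prob d n Q b = (cmod (pauli_coeff d n Q b))\<^sup>2 / real d ^ (2 * n)"
  by (simp add: pauli_prob_def pauli_coeff_def)

lemma pauli_coeff_eq_sum:
  "pauli_coeff d n Q b = (\<Sum>x\<in>qbasis d n. \<Sum>y\<in>qbasis d n. Q x y * pauli d n b y x)"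
  by (simp add: pauli_coeff_def qtr_def qmul_def)

lemma pauli_coeff_cong: "qeq d n Q Q' \<Longrightarrow> pauli_coeff d n Q b = pauli_coeff d n Q' b"
  by (simp add: pauli_coeff_eq_sum qeq_def)

lemma pauli_coeff_scale: "pauli_coeff d n (\<lambda>x y. c * Q x y) b = c * pauli_coeff d n Q b"
  by (simp add: pauli_coeff_def qmul_scale_left qtr_scale)

lemma pauli_coeff_expansion:
  assumes "0 < d" "x \<in> qbasis d n" "y \<in> qbasis d n"
  shows "(\<Sum>b\<in>paulivecs d n. pauli_coeff d n Q b * cnj (pauli d n b y x)) = of_nat d ^ n * Q x y"
proof -
  let ?B = "qbasis d n" and ?P = "paulivecs d n"
  have "(\<Sum>b\<in>?P. pauli_coeff d n Q b * cnj (pauli d n b y x))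
      = (\<Sum>b\<in>?P. \<Sum>x'\<in>?B. \<Sum>y'\<in>?B. Q x' y' * (pauli d n b y' x' * cnj (pauli d n b y x)))"
    by (simp add: pauli_coeff_eq_sum sum_distrib_right mult.assoc)
  also have "\<dots> = (\<Sum>x'\<in>?B. \<Sum>y'\<in>?B. \<Sum>b\<in>?P. Q x' y' * (pauli d n b y' x' * cnj (pauli d n b y x)))"
    by (rule trans[OF sum.swap sum.cong[OF refl sum.swap]])
  also have "\<dots> = (\<Sum>x'\<in>?B. \<Sum>y'\<in>?B. if x' = x \<and> y' = y then of_nat d ^ n * Q x' y' else 0)"
    using assms by (intro sum.cong refl) (simp add: sum_distrib_left[symmetric] pauli_completeness)
  also have "\<dots> = (\<Sum>x'\<in>?B. if x' = x then of_nat d ^ n * Q x' y else 0)"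
    using assms by (intro sum.cong refl) auto
  also have "\<dots> = of_nat d ^ n * Q x y"
    using assms by simp
  finally show ?thesis .
qed

lemma sum_norm_pauli_coeff:
  assumes "0 < d"
  shows "(\<Sum>b\<in>paulivecs d n. (cmod (pauli_coeff d n Q b))\<^sup>2)
       = real d ^ n * (\<Sum>x\<in>qbasis d n. \<Sum>y\<in>qbasis d n. (cmod (Q x y))\<^sup>2)"
proof -
  let ?B = "qbasis d n" and ?P = "paulivecs d n"
  have "(\<Sum>b\<in>?P. pauli_coeff d n Q b * cnj (pauli_coeff d n Q b))
      = (\<Sum>b\<in>?P. \<Sum>x\<in>?B. \<Sum>y\<in>?B. cnj (Q x y) * (pauli_coeff d n Q b * cnj (pauli d n b y x)))"
    by (subst (2) pauli_coeff_eq_sum) (simp add: sum_distrib_left mult.left_commute)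
  also have "\<dots> = (\<Sum>x\<in>?B. \<Sum>y\<in>?B. cnj (Q x y) * (\<Sum>b\<in>?P. pauli_coeff d n Q b * cnj (pauli d n b y x)))"
    by (simp add: sum_distrib_left) (rule trans[OF sum.swap sum.cong[OF refl sum.swap]])
  also have "\<dots> = (\<Sum>x\<in>?B. \<Sum>y\<in>?B. of_nat d ^ n * (Q x y * cnj (Q x y)))"
    using assms by (intro sum.cong refl) (simp add: pauli_coeff_expansion ac_simps)
  finally have "complex_of_real (\<Sum>b\<in>?P. (cmod (pauli_coeff d n Q b))\<^sup>2)
      = complex_of_real (real d ^ n * (\<Sum>x\<in>?B. \<Sum>y\<in>?B. (cmod (Q x y))\<^sup>2))"
    unfolding of_real_sum of_real_mult complex_norm_square by (simp add: sum_distrib_left)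
  then show ?thesis
    by (rule of_real_eq_iff[THEN iffD1])
qed

lemma sum_pauli_prob:
  assumes "0 < d" "qeq d n (qmul d n Q (qadj Q)) qid"
  shows "(\<Sum>b\<in>paulivecs d n. pauli_prob d n Q b) = 1"
proof -
  let ?B = "qbasis d n"
  have "complex_of_real (\<Sum>x\<in>?B. \<Sum>y\<in>?B. (cmod (Q x y))\<^sup>2) = (\<Sum>x\<in>?B. qmul d n Q (qadj Q) x x)"
    unfolding of_real_sum complex_norm_square by (simp add: qmul_def qadj_def)
  also have "\<dots> = complex_of_real (real d ^ n)"
    using assms(2) by (simp add: qeq_def qid_def card_qbasis)
  finally have "(\<Sum>x\<in>?B. \<Sum>y\<in>?B. (cmod (Q x y))\<^sup>2) = real d ^ n"
    by (rule of_real_eq_iff[THEN iffD1])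
  then have "(\<Sum>b\<in>paulivecs d n. (cmod (pauli_coeff d n Q b))\<^sup>2) = real d ^ (2 * n)"
    using assms(1) by (simp add: sum_norm_pauli_coeff mult_2 power_add)
  then show ?thesis
    using assms(1) by (simp add: pauli_prob_eq sum_divide_distrib[symmetric])
qed

section \<open>Pauli entropy and magic\<close>

definition xlnx :: "real \<Rightarrow> real" where
  "xlnx p = (if p = 0 then 0 else p * ln p)"

lemma pauli_entropy_eq: "pauli_entropy d n Q = - (\<Sum>a\<in>paulivecs d n. xlnx (pauli_prob d n Q a))"
  by (simp add: pauli_entropy_def xlnx_def Let_def)

lemma xlnx_nonpos: "0 \<le> p \<Longrightarrow> p \<le> 1 \<Longrightarrow> xlnx p \<le> 0"
  by (simp add: xlnx_def mult_nonneg_nonpos)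

lemma xlnx_eq_0_iff: "0 \<le> p \<Longrightarrow> xlnx p = 0 \<longleftrightarrow> p = 0 \<or> p = 1"
  by (auto simp: xlnx_def)

lemma xlnx_mult: "0 \<le> p \<Longrightarrow> 0 \<le> q \<Longrightarrow> xlnx (p * q) = p * xlnx q + q * xlnx p"
  by (auto simp: xlnx_def ln_mult algebra_simps)

lemma sum_xlnx_eq_0_imp_point_mass:
  assumes "finite A" "\<And>a. a \<in> A \<Longrightarrow> 0 \<le> p a" "sum p A = 1" "(\<Sum>a\<in>A. xlnx (p a)) = 0"
  shows "\<exists>a0\<in>A. p a0 = 1 \<and> (\<forall>a\<in>A - {a0}. p a = 0)"
proof -
  have "p a \<le> 1" if "a \<in> A" for a
    using member_le_sum[of a A p] assms that by simp
  then have "\<forall>a\<in>A. - xlnx (p a) = 0"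
    using assms by (subst sum_nonneg_eq_0_iff[symmetric]) (auto simp: sum_negf xlnx_nonpos)
  then have "p a = 0 \<or> p a = 1" if "a \<in> A" for a
    using assms(2) that xlnx_eq_0_iff by force
  moreover have "\<not> (\<forall>a\<in>A. p a = 0)"
    using assms(3) sum.neutral[of A p] by force
  ultimately obtain a0 where a0: "a0 \<in> A" "p a0 = 1"
    by blast
  moreover have "sum p (A - {a0}) = 0"
    using assms(1,3) a0 sum.remove[of A a0 p] by simp
  then have "\<forall>a\<in>A - {a0}. p a = 0"
    using assms by (subst sum_nonneg_eq_0_iff[symmetric]) auto
  ultimately show ?thesis
    by blast
qed

lemma sum_xlnx_product:
  assumes "finite A" "finite B" "\<And>a. a \<in> A \<Longrightarrow> 0 \<le> p a" "\<And>b. b \<in> B \<Longrightarrow> 0 \<le> q b"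
    and "sum p A = 1" "sum q B = 1"
  shows "(\<Sum>a\<in>A. \<Sum>b\<in>B. xlnx (p a * q b)) = (\<Sum>a\<in>A. xlnx (p a)) + (\<Sum>b\<in>B. xlnx (q b))"
proof -
  have "(\<Sum>a\<in>A. \<Sum>b\<in>B. xlnx (p a * q b)) = (\<Sum>a\<in>A. \<Sum>b\<in>B. p a * xlnx (q b) + q b * xlnx (p a))"
    using assms by (intro sum.cong refl) (simp add: xlnx_mult)
  also have "\<dots> = (\<Sum>a\<in>A. p a * (\<Sum>b\<in>B. xlnx (q b)) + sum q B * xlnx (p a))"
    by (simp add: sum.distrib sum_distrib_left[symmetric] sum_distrib_right[symmetric])
  also have "\<dots> = sum p A * (\<Sum>b\<in>B. xlnx (q b)) + sum q B * (\<Sum>a\<in>A. xlnx (p a))"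
    by (simp add: sum.distrib sum_distrib_left[symmetric] sum_distrib_right[symmetric])
  finally show ?thesis
    using assms by simp
qed

lemma pauli_prob_nonneg: "0 \<le> pauli_prob d n Q b"
  by (simp add: pauli_prob_def)

lemma pauli_entropy_nonneg:
  assumes "0 < d" "qeq d n (qmul d n Q (qadj Q)) qid"
  shows "0 \<le> pauli_entropy d n Q"
proof -
  have "pauli_prob d n Q a \<le> 1" if "a \<in> paulivecs d n" for a
    using sum_pauli_prob[OF assms] that by (metis finite_paulivecs member_le_sum pauli_prob_nonneg)
  then show ?thesis
    by (simp add: pauli_entropy_eq sum_nonpos xlnx_nonpos pauli_prob_nonneg)
qed

lemma pauli_entropy_phased_pauli:
  assumes "0 < d" "phased_pauli d n Q"
  shows "pauli_entropy d n Q = 0"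
proof -
  obtain b c where b: "b \<in> paulivecs d n" "cmod c = 1" "qeq d n Q (\<lambda>x y. c * pauli d n b x y)"
    using assms(2) unfolding phased_pauli_def by blast
  have "xlnx (pauli_prob d n Q e) = 0" if e: "e \<in> paulivecs d n" for e
  proof -
    have "pauli_coeff d n Q e = c * qtr d n (qmul d n (pauli d n b) (pauli d n e))"
      unfolding pauli_coeff_cong[OF b(3)] pauli_coeff_scale by (simp add: pauli_coeff_def)
    then have "cmod (pauli_coeff d n Q e) = (if label_add d b e = label_zero then real d ^ n else 0)"
      using assms(1) b e by (simp add: qtr_pauli_mult norm_mult norm_power)
    then have "pauli_prob d n Q e = 0 \<or> pauli_prob d n Q e = 1"
      using assms(1) by (simp add: pauli_prob_eq power_mult[symmetric] mult.commute)
    then show ?thesis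
      using xlnx_eq_0_iff pauli_prob_nonneg by blast
  qed
  then show ?thesis
    by (simp add: pauli_entropy_eq)
qed

lemma phased_pauli_single_coeff:
  assumes "0 < d" "b0 \<in> paulivecs d n" "cmod (pauli_coeff d n Q b0) = real d ^ n"
    and "\<And>b. b \<in> paulivecs d n - {b0} \<Longrightarrow> pauli_coeff d n Q b = 0"
  shows "phased_pauli d n Q"
proof -
  define c where "c = pauli_coeff d n Q b0 / of_nat d ^ n"
  \<comment> \<open>Only the \<open>b\<^sub>0\<close> term survives in the Pauli expansion of \<open>Q\<close>.\<close>
  have "qeq d n Q (\<lambda>x y. c * qadj (pauli d n b0) x y)"
    unfolding qeq_def
  proof (intro ballI)
    fix x y assume "x \<in> qbasis d n" "y \<in> qbasis d n"
    then have "of_nat d ^ n * Q x y = (\<Sum>b\<in>paulivecs d n. pauli_coeff d n Q b * cnj (pauli d n b y x))"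
      using assms(1) by (simp add: pauli_coeff_expansion)
    also have "\<dots> = pauli_coeff d n Q b0 * cnj (pauli d n b0 y x)"
      using assms(2,4) by (simp add: sum.remove[of _ b0])
    finally show "Q x y = c * qadj (pauli d n b0) x y"
      using assms(1) by (simp add: c_def qadj_def field_simps)
  qed
  moreover have "cmod c = 1"
    using assms(1,3) by (simp add: c_def norm_divide norm_power)
  moreover have "phased_pauli d n (qadj (pauli d n b0))"
    using assms(1,2) label_neg_mem_paulivecs[OF assms(1,2)]
    by (intro phased_pauli_cong[OF qeq_sym[OF qadj_pauli]] phased_pauli_scale[OF _ phased_pauli_pauli])
      simp_all
  ultimately show ?thesis
    using phased_pauli_cong[OF qeq_sym] phased_pauli_scale by blast
qed

lemma pauli_entropy_eq_0_iff:
  assumes "0 < d" "qeq d n (qmul d n Q (qadj Q)) qid"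
  shows "pauli_entropy d n Q = 0 \<longleftrightarrow> phased_pauli d n Q"
proof
  assume "pauli_entropy d n Q = 0"
  then obtain b0 where b0: "b0 \<in> paulivecs d n" "pauli_prob d n Q b0 = 1"
      and rest: "\<forall>b\<in>paulivecs d n - {b0}. pauli_prob d n Q b = 0"
    using sum_xlnx_eq_0_imp_point_mass[OF finite_paulivecs pauli_prob_nonneg sum_pauli_prob[OF assms]]
    by (auto simp: pauli_entropy_eq)
  have "(cmod (pauli_coeff d n Q b0))\<^sup>2 = (real d ^ n)\<^sup>2"
    using assms(1) b0(2) by (simp add: pauli_prob_eq power_mult[symmetric] mult.commute)
  then have "cmod (pauli_coeff d n Q b0) = real d ^ n"
    by (simp add: power2_eq_iff_nonneg)
  moreover have "pauli_coeff d n Q b = 0" if "b \<in> paulivecs d n - {b0}" for b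
    using rest that assms(1) by (simp add: pauli_prob_eq)
  ultimately show "phased_pauli d n Q"
    by (rule phased_pauli_single_coeff[OF assms(1) b0(1)])
next
  assume "phased_pauli d n Q"
  with assms(1) show "pauli_entropy d n Q = 0"
    by (rule pauli_entropy_phased_pauli)
qed

lemma phased_pauli_qconj_qmul:
  assumes "0 < d" "qunitary d n U"
    and "phased_pauli d n (qconj d n U A)" "phased_pauli d n (qconj d n U B)"
  shows "phased_pauli d n (qconj d n U (qmul d n A B))"
  by (rule phased_pauli_cong[OF qeq_sym[OF qconj_qmul[OF assms(2)]] phased_pauli_qmul[OF assms(1,3,4)]])

lemma phased_pauli_qconj_label_zero:
  assumes "0 < d" "qunitary d n U"
  shows "phased_pauli d n (qconj d n U (pauli d n label_zero))"
proof -
  have "qeq d n (pauli d n label_zero) (qconj d n U (pauli d n label_zero))"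
    by (rule qeq_trans[OF pauli_label_zero qeq_sym[OF qconj_qid[OF assms(2) pauli_label_zero]]])
  then show ?thesis
    by (rule phased_pauli_cong[OF _ phased_pauli_pauli[OF label_zero_mem_paulivecs[OF assms(1)]]])
qed

definition label_take :: "nat \<Rightarrow> (nat \<Rightarrow> nat \<times> nat) \<Rightarrow> nat \<Rightarrow> nat \<times> nat" where
  "label_take m a = (\<lambda>i. if i < m then a i else (0, 0))"

definition label_single :: "nat \<Rightarrow> (nat \<Rightarrow> nat \<times> nat) \<Rightarrow> nat \<Rightarrow> nat \<times> nat" where
  "label_single m a = (\<lambda>i. if i = m then a m else (0, 0))"

lemma pauli_label_take_Suc:
  assumes "0 < d" "a \<in> paulivecs d n" "m < n"
  shows "qeq d n (pauli d n (label_take (Suc m) a))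
           (qmul d n (pauli d n (label_take m a)) (pauli d n (label_single m a)))"
proof -
  have "label_add d (label_take m a) (label_single m a) = label_take (Suc m) a"
    using assms by (auto simp: fun_eq_iff label_add_def label_take_def label_single_def paulivecs_def)
  moreover have "pauli_phase d n (label_take m a) (label_single m a) = 1"
    unfolding pauli_phase_def by (rule prod.neutral) (auto simp: label_take_def label_single_def)
  ultimately show ?thesis
    using pauli_mult[OF assms(1), of n "label_take m a" "label_single m a"] by (simp add: qeq_sym)
qed

lemma label_single_cases:
  assumes "a \<in> paulivecs d n" "m < n"
  shows "label_single m a = label_zero \<or> label_single m a \<in> paulivecs d n \<and> pweight n (label_single m a) = 1"
proof (cases "a m = (0, 0)")
  case True
  then show ?thesis
    by (auto simp: fun_eq_iff label_single_def label_zero_def)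
next
  case False
  then have "{i. i < n \<and> label_single m a i \<noteq> (0, 0)} = {m}"
    using assms(2) by (auto simp: label_single_def)
  moreover have "label_single m a \<in> paulivecs d n"
    using assms by (auto simp: paulivecs_def label_single_def)
  ultimately show ?thesis
    by (simp add: pweight_def)
qed

lemma phased_pauli_qconj_label_take:
  assumes "0 < d" "qunitary d n U" "a \<in> paulivecs d n" "m \<le> n"
    and weight_one: "\<And>b. b \<in> paulivecs d n \<Longrightarrow> pweight n b = 1 \<Longrightarrow>
      phased_pauli d n (qconj d n U (pauli d n b))"
  shows "phased_pauli d n (qconj d n U (pauli d n (label_take m a)))"
  using assms(4)
proof (induction m)
  case 0
  then show ?case
    using phased_pauli_qconj_label_zero[OF assms(1,2)] by (simp add: label_take_def label_zero_def)
next
  case (Suc m)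
  then have "m < n"
    by simp
  then have "phased_pauli d n (qconj d n U (pauli d n (label_single m a)))"
    using label_single_cases[OF assms(3)] phased_pauli_qconj_label_zero[OF assms(1,2)] weight_one
    by metis
  then have "phased_pauli d n
      (qconj d n U (qmul d n (pauli d n (label_take m a)) (pauli d n (label_single m a))))"
    using Suc by (intro phased_pauli_qconj_qmul[OF assms(1,2)]) simp_all
  then show ?case
    by (rule phased_pauli_cong[OF qconj_cong[OF qeq_sym[OF pauli_label_take_Suc[OF assms(1,3) \<open>m < n\<close>]]]])
qed

lemma clifford_iff_weight_one:
  assumes "0 < d" "qunitary d n U"
  shows "clifford d n U \<longleftrightarrow>
    (\<forall>a\<in>paulivecs d n. pweight n a = 1 \<longrightarrow> phased_pauli d n (qconj d n U (pauli d n a)))"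
proof (intro iffI)
  assume weight_one: "\<forall>a\<in>paulivecs d n. pweight n a = 1 \<longrightarrow> phased_pauli d n (qconj d n U (pauli d n a))"
  have "label_take n a = a" if "a \<in> paulivecs d n" for a
    using that by (auto simp: fun_eq_iff label_take_def paulivecs_def)
  then have "phased_pauli d n (qconj d n U (pauli d n a))" if "a \<in> paulivecs d n" for a
    using phased_pauli_qconj_label_take[OF assms that order_refl] weight_one that by simp
  then show "clifford d n U"
    using assms(2) by (simp add: clifford_iff_phased_pauli)
qed (simp add: clifford_iff_phased_pauli)

lemma weight_one_labels_nonempty:
  assumes "2 \<le> d" "1 \<le> n"
  shows "{a \<in> paulivecs d n. pweight n a = 1} \<noteq> {}"
proof -
  let ?a = "label_zero(0 := (1, 0))"
  have "{i. i < n \<and> ?a i \<noteq> (0, 0)} = {0}"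
    using assms by (auto simp: label_zero_def)
  then have "pweight n ?a = 1"
    by (simp add: pweight_def)
  moreover have "?a \<in> paulivecs d n"
    using assms by (auto simp: paulivecs_def label_zero_def)
  ultimately show ?thesis
    by blast
qed

lemma pauli_entropy_qconj_pauli_nonneg:
  "0 < d \<Longrightarrow> qunitary d n U \<Longrightarrow> 0 \<le> pauli_entropy d n (qconj d n U (pauli d n a))"
  by (intro pauli_entropy_nonneg qconj_mult_adj pauli_mult_adj)

lemma magic_nonneg:
  assumes "2 \<le> d" "1 \<le> n" "qunitary d n U"
  shows "0 \<le> magic d n U"
proof -
  obtain a where "a \<in> paulivecs d n" "pweight n a = 1"
    using weight_one_labels_nonempty[OF assms(1,2)] by blast
  then have "pauli_entropy d n (qconj d n U (pauli d n a)) \<le> magic d n U"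
    unfolding magic_def by (intro Max_ge) auto
  moreover have "0 \<le> pauli_entropy d n (qconj d n U (pauli d n a))"
    using assms by (intro pauli_entropy_qconj_pauli_nonneg) simp_all
  ultimately show ?thesis
    by linarith
qed

lemma magic_eq_0_iff:
  assumes "2 \<le> d" "1 \<le> n" "qunitary d n U"
  shows "magic d n U = 0 \<longleftrightarrow> clifford d n U"
proof -
  let ?H = "\<lambda>a. pauli_entropy d n (qconj d n U (pauli d n a))"
  let ?W = "{a \<in> paulivecs d n. pweight n a = 1}"
  have "magic d n U = 0 \<longleftrightarrow> (\<forall>a\<in>?W. ?H a = 0)"
  proof -
    have "\<forall>a\<in>?W. 0 \<le> ?H a"
      using assms by (simp add: pauli_entropy_qconj_pauli_nonneg)
    then have "(\<forall>a\<in>?W. ?H a \<le> 0) \<longleftrightarrow> (\<forall>a\<in>?W. ?H a = 0)"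
      by force
    then show ?thesis
      unfolding magic_def using weight_one_labels_nonempty[OF assms(1,2)]
      by (subst Max_eq_iff) (auto simp: image_iff)
  qed
  also have "\<dots> \<longleftrightarrow> (\<forall>a\<in>?W. phased_pauli d n (qconj d n U (pauli d n a)))"
    using assms by (simp add: pauli_entropy_eq_0_iff qconj_mult_adj pauli_mult_adj)
  also have "\<dots> \<longleftrightarrow> clifford d n U"
    using assms clifford_iff_weight_one[of d n U] by auto
  finally show ?thesis .
qed

section \<open>Invariance under Clifford unitaries\<close>

lemma clifford_label_permutation:
  assumes "0 < d" "clifford d n V"
  obtains f g where "bij_betw f (paulivecs d n) (paulivecs d n)"
    and "\<And>a. a \<in> paulivecs d n \<Longrightarrow>
           qeq d n (qconj d n (qadj V) (pauli d n (f a))) (\<lambda>x y. g a * pauli d n a x y)"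
    and "\<And>a. a \<in> paulivecs d n \<Longrightarrow> cmod (g a) = 1"
proof -
  have V: "qunitary d n V"
    using assms(2) by (simp add: clifford_def)
  have "\<forall>a\<in>paulivecs d n. \<exists>b. b \<in> paulivecs d n \<and>
      (\<exists>c. cmod c = 1 \<and> qeq d n (qconj d n V (pauli d n a)) (\<lambda>x y. c * pauli d n b x y))"
    using assms(2) unfolding clifford_iff_phased_pauli phased_pauli_def by blast
  from bchoice[OF this] obtain f where "\<forall>a\<in>paulivecs d n. \<exists>c. f a \<in> paulivecs d n \<and> cmod c = 1 \<and>
      qeq d n (qconj d n V (pauli d n a)) (\<lambda>x y. c * pauli d n (f a) x y)"
    by blast
  from bchoice[OF this] obtain h where fh: "\<forall>a\<in>paulivecs d n. f a \<in> paulivecs d n \<and> cmod (h a) = 1 \<and>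
      qeq d n (qconj d n V (pauli d n a)) (\<lambda>x y. h a * pauli d n (f a) x y)"
    by blast
  then have pulled_back: "qeq d n (qconj d n (qadj V) (pauli d n (f a))) (\<lambda>x y. cnj (h a) * pauli d n a x y)"
    and h: "cmod (h a) = 1" if "a \<in> paulivecs d n" for a
    using that by (auto intro: qconj_adj_eq_scale[OF V])
  have "inj_on f (paulivecs d n)"
  proof (rule inj_onI)
    fix a a' assume a: "a \<in> paulivecs d n" and a': "a' \<in> paulivecs d n" and "f a = f a'"
    then have "qeq d n (\<lambda>x y. cnj (h a) * pauli d n a x y) (\<lambda>x y. cnj (h a') * pauli d n a' x y)"
      using qeq_trans[OF qeq_sym[OF pulled_back[OF a]]] pulled_back[OF a'] by simp
    from qeq_scale[OF this, of "h a"]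
    have "qeq d n (pauli d n a) (\<lambda>x y. (h a * cnj (h a')) * pauli d n a' x y)"
      using h[OF a] complex_norm_square[of "h a"] by (simp add: mult.assoc[symmetric])
    then show "a = a'"
      using assms(1) a a' by (rule pauli_eq_scaled_pauli_imp_eq[rotated 3])
  qed
  then have "bij_betw f (paulivecs d n) (paulivecs d n)"
    using fh by (simp add: bij_betw_def endo_inj_surj image_subsetI)
  then show ?thesis
    using pulled_back h by (intro that[of f "\<lambda>a. cnj (h a)"]) simp_all
qed

lemma pauli_entropy_qconj_clifford:
  assumes "0 < d" "clifford d n V"
  shows "pauli_entropy d n (qconj d n V Q) = pauli_entropy d n Q"
proof -
  obtain f g where f: "bij_betw f (paulivecs d n) (paulivecs d n)"
    and fg: "\<And>a. a \<in> paulivecs d n \<Longrightarrow>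
           qeq d n (qconj d n (qadj V) (pauli d n (f a))) (\<lambda>x y. g a * pauli d n a x y)"
    and g: "\<And>a. a \<in> paulivecs d n \<Longrightarrow> cmod (g a) = 1"
    using clifford_label_permutation[OF assms] by blast
  have "pauli_coeff d n (qconj d n V Q) (f a) = g a * pauli_coeff d n Q a" if a: "a \<in> paulivecs d n" for a
  proof -
    have "pauli_coeff d n (qconj d n V Q) (f a) = qtr d n (qmul d n Q (qconj d n (qadj V) (pauli d n (f a))))"
      by (simp add: pauli_coeff_def qtr_qmul_qconj)
    also have "\<dots> = qtr d n (qmul d n Q (\<lambda>x y. g a * pauli d n a x y))"
      by (rule qtr_qeq[OF qeq_qmul[OF qeq_refl fg[OF a]]])
    finally show ?thesis
      by (simp add: qmul_scale_right qtr_scale pauli_coeff_def)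
  qed
  then have "pauli_prob d n (qconj d n V Q) (f a) = pauli_prob d n Q a" if "a \<in> paulivecs d n" for a
    using that g by (simp add: pauli_prob_eq norm_mult)
  moreover have "(\<Sum>b\<in>paulivecs d n. xlnx (pauli_prob d n (qconj d n V Q) b))
      = (\<Sum>a\<in>paulivecs d n. xlnx (pauli_prob d n (qconj d n V Q) (f a)))"
    by (rule sum.reindex_bij_betw[OF f, symmetric])
  ultimately show ?thesis
    by (simp add: pauli_entropy_eq)
qed

lemma magic_qmul_clifford:
  "0 < d \<Longrightarrow> clifford d n V \<Longrightarrow> magic d n (qmul d n V U) = magic d n U"
  by (simp add: magic_def qconj_qmul_left pauli_entropy_qconj_clifford)

section \<open>Tensor products\<close>

lemma sum_qbasis_add:
  "(\<Sum>x\<in>qbasis d (m + n). g x) = (\<Sum>x\<in>qbasis d m. \<Sum>y\<in>qbasis d n. g (seq_append m x y))"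
  unfolding qbasis_eq_padded_seqs by (rule sum_padded_seqs_add)

lemma sum_paulivecs_add:
  "(\<Sum>a\<in>paulivecs d (m + n). g a) = (\<Sum>a\<in>paulivecs d m. \<Sum>b\<in>paulivecs d n. g (seq_append m a b))"
  unfolding paulivecs_eq_padded_seqs by (rule sum_padded_seqs_add)

lemma seq_append_take: "x \<in> qbasis d m \<Longrightarrow> (\<lambda>i. if i < m then seq_append m x y i else 0) = x"
  by (auto simp: fun_eq_iff seq_append_def qbasis_def)

lemma seq_append_drop: "(\<lambda>i. seq_append m x y (i + m)) = y"
  by (simp add: fun_eq_iff seq_append_def)

lemma qtensor_seq_append:
  "x \<in> qbasis d m \<Longrightarrow> y \<in> qbasis d m \<Longrightarrow>
     qtensor m A B (seq_append m x x') (seq_append m y y') = A x y * B x' y'"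
  by (simp add: qtensor_def seq_append_take seq_append_drop)

lemma qmul_qtensor:
  "qmul d (m + n) (qtensor m A A') (qtensor m B B') = qtensor m (qmul d m A B) (qmul d n A' B')"
proof (intro ext)
  fix x y
  let ?l = "\<lambda>x i. if i < m then x i else 0" and ?r = "\<lambda>x i. x (i + m)"
  have "qmul d (m + n) (qtensor m A A') (qtensor m B B') x y
      = (\<Sum>z\<in>qbasis d m. \<Sum>z'\<in>qbasis d n. (A (?l x) z * B z (?l y)) * (A' (?r x) z' * B' z' (?r y)))"
    unfolding qmul_def sum_qbasis_add
    by (intro sum.cong refl) (simp add: qtensor_def seq_append_take seq_append_drop mult_ac)
  also have "\<dots> = qtensor m (qmul d m A B) (qmul d n A' B') x y"
    by (simp add: qtensor_def qmul_def sum_product)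
  finally show "qmul d (m + n) (qtensor m A A') (qtensor m B B') x y
      = qtensor m (qmul d m A B) (qmul d n A' B') x y" .
qed

lemma qadj_qtensor: "qadj (qtensor m A B) = qtensor m (qadj A) (qadj B)"
  by (simp add: fun_eq_iff qadj_def qtensor_def)

lemma qtr_qtensor: "qtr d (m + n) (qtensor m A B) = qtr d m A * qtr d n B"
  unfolding qtr_def sum_qbasis_add sum_product
  by (intro sum.cong refl) (simp add: qtensor_seq_append)

lemma qconj_qtensor:
  "qconj d (m + n) (qtensor m U U') (qtensor m A A') = qtensor m (qconj d m U A) (qconj d n U' A')"
  by (simp add: qconj_def qadj_qtensor qmul_qtensor)

lemma prod_lessThan_add:
  fixes f :: "nat \<Rightarrow> 'a::comm_monoid_mult"
  shows "(\<Prod>i<m + n. f i) = (\<Prod>i<m. f i) * (\<Prod>i<n. f (i + m))"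
proof -
  have "prod f {0..<m + n} = prod f {0..<m} * prod f {m..<m + n}"
    by (simp add: prod.atLeastLessThan_concat)
  moreover have "prod f {m..<m + n} = prod (\<lambda>i. f (i + m)) {0..<n}"
    using prod.shift_bounds_nat_ivl[of f 0 m n] by (simp add: add.commute)
  ultimately show ?thesis
    by (simp add: lessThan_atLeast0)
qed

lemma pauli_seq_append:
  "pauli d (m + n) (seq_append m a b) = qtensor m (pauli d m a) (pauli d n b)"
  by (simp add: fun_eq_iff pauli_def qtensor_def prod_lessThan_add seq_append_def)

lemma pauli_prob_qtensor:
  "pauli_prob d (m + n) (qtensor m Q Q') (seq_append m b b') = pauli_prob d m Q b * pauli_prob d n Q' b'"
  by (simp add: pauli_prob_def pauli_seq_append qmul_qtensor qtr_qtensor norm_mult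
      power_mult_distrib power_add)

lemma pauli_entropy_qtensor:
  assumes "0 < d" "qeq d m (qmul d m Q (qadj Q)) qid" "qeq d n (qmul d n Q' (qadj Q')) qid"
  shows "pauli_entropy d (m + n) (qtensor m Q Q') = pauli_entropy d m Q + pauli_entropy d n Q'"
  using sum_xlnx_product[OF finite_paulivecs finite_paulivecs pauli_prob_nonneg pauli_prob_nonneg
      sum_pauli_prob[OF assms(1,2)] sum_pauli_prob[OF assms(1,3)]]
  by (simp add: pauli_entropy_eq sum_paulivecs_add pauli_prob_qtensor)

lemma pweight_seq_append: "pweight (m + n) (seq_append m a b) = pweight m a + pweight n b"
proof -
  have "{i. i < m + n \<and> seq_append m a b i \<noteq> (0, 0)}
      = {i. i < m \<and> a i \<noteq> (0, 0)} \<union> (\<lambda>j. j + m) ` {j. j < n \<and> b j \<noteq> (0, 0)}"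
  proof (rule set_eqI)
    fix i
    show "i \<in> {i. i < m + n \<and> seq_append m a b i \<noteq> (0, 0)} \<longleftrightarrow>
        i \<in> {i. i < m \<and> a i \<noteq> (0, 0)} \<union> (\<lambda>j. j + m) ` {j. j < n \<and> b j \<noteq> (0, 0)}"
      by (cases "i < m") (auto simp: seq_append_def image_iff intro!: exI[of _ "i - m"])
  qed
  moreover have "card ((\<lambda>j. j + m) ` {j. j < n \<and> b j \<noteq> (0, 0)}) = card {j. j < n \<and> b j \<noteq> (0, 0)}"
    by (rule card_image) (simp add: inj_on_def)
  moreover have "{i. i < m \<and> a i \<noteq> (0, 0)} \<inter> (\<lambda>j. j + m) ` {j. j < n \<and> b j \<noteq> (0, 0)} = {}"
    by auto
  ultimately show ?thesis
    unfolding pweight_def by (simp add: card_Un_disjoint)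
qed

lemma pweight_eq_0_iff:
  assumes "a \<in> paulivecs d n"
  shows "pweight n a = 0 \<longleftrightarrow> a = label_zero"
proof -
  have "pweight n a = 0 \<longleftrightarrow> (\<forall>i<n. a i = (0, 0))"
    by (auto simp: pweight_def)
  also have "\<dots> \<longleftrightarrow> a = label_zero"
  proof (intro iffI ext)
    fix i assume "\<forall>i<n. a i = (0, 0)"
    then show "a i = label_zero i"
      using assms by (cases "i < n") (simp_all add: paulivecs_def label_zero_def)
  qed (simp add: label_zero_def)
  finally show ?thesis .
qed

lemma weight_one_labels_add:
  assumes "0 < d"
  shows "{a \<in> paulivecs d (m + n). pweight (m + n) a = 1}
       = (\<lambda>a. seq_append m a label_zero) ` {a \<in> paulivecs d m. pweight m a = 1}
         \<union> (\<lambda>b. seq_append m label_zero b) ` {b \<in> paulivecs d n. pweight n b = 1}"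
proof -
  have labels: "paulivecs d (m + n) = (\<lambda>(a, b). seq_append m a b) ` (paulivecs d m \<times> paulivecs d n)"
    using bij_betw_imp_surj_on[OF bij_betw_seq_append[where A = "{..<d} \<times> {..<d}" and z = "(0, 0)"]]
    by (simp add: paulivecs_eq_padded_seqs)
  have "pweight (m + n) (seq_append m a b) = 1 \<longleftrightarrow>
      pweight m a = 1 \<and> b = label_zero \<or> a = label_zero \<and> pweight n b = 1"
    if "a \<in> paulivecs d m" "b \<in> paulivecs d n" for a b
    using that pweight_eq_0_iff[of a d m] pweight_eq_0_iff[of b d n] by (auto simp: pweight_seq_append)
  then show ?thesis
    unfolding labels using label_zero_mem_paulivecs[OF assms] by auto
qed

lemma magic_qtensor:
  assumes "2 \<le> d" "1 \<le> m" "1 \<le> n" "qunitary d m U" "qunitary d n U'"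
  shows "magic d (m + n) (qtensor m U U') = max (magic d m U) (magic d n U')"
proof -
  have d: "0 < d"
    using assms(1) by simp
  let ?H = "\<lambda>k V a. pauli_entropy d k (qconj d k V (pauli d k a))"
  have H_append: "?H (m + n) (qtensor m U U') (seq_append m a b) = ?H m U a + ?H n U' b" for a b
    unfolding pauli_seq_append qconj_qtensor
    using assms(4,5) d by (intro pauli_entropy_qtensor qconj_mult_adj pauli_mult_adj)
  have "?H m U label_zero = 0" "?H n U' label_zero = 0"
    using assms(4,5) d by (simp_all add: pauli_entropy_phased_pauli phased_pauli_qconj_label_zero)
  then have "?H (m + n) (qtensor m U U') ` {a \<in> paulivecs d (m + n). pweight (m + n) a = 1}
      = ?H m U ` {a \<in> paulivecs d m. pweight m a = 1} \<union> ?H n U' ` {b \<in> paulivecs d n. pweight n b = 1}"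
    unfolding weight_one_labels_add[OF d] image_Un image_image H_append by simp
  then show ?thesis
    unfolding magic_def
    using weight_one_labels_nonempty[OF assms(1,2)] weight_one_labels_nonempty[OF assms(1,3)]
    by (simp add: Max_Un)
qed

theorem mainTheorem13:
  fixes d :: nat
  assumes "d \<ge> 2"
  shows "(\<forall>n\<ge>1. \<forall>U. qunitary d n U \<longrightarrow>
            magic d n U \<ge> 0 \<and> (magic d n U = 0 \<longleftrightarrow> clifford d n U))
       \<and> (\<forall>n\<ge>1. \<forall>U V. qunitary d n U \<longrightarrow> clifford d n V \<longrightarrow>
            magic d n (qmul d n V U) = magic d n U)
       \<and> (\<forall>n1\<ge>1. \<forall>n2\<ge>1. \<forall>U1 U2. qunitary d n1 U1 \<longrightarrow> qunitary d n2 U2 \<longrightarrow>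
            magic d (n1 + n2) (qtensor n1 U1 U2) = max (magic d n1 U1) (magic d n2 U2))"
  using assms by (simp add: magic_nonneg magic_eq_0_iff magic_qmul_clifford magic_qtensor)

end
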